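(* Let $n \ge 2$. Then $|S_{1,1}(n)|$ is odd if and only if $n = 2^k$ for some integer $k \ge 1$.
   Context: For $n \ge 2$, let $\mathcal{I}_n$ be the set of all irreducible polynomials of degree $n$ in $\mathbb{F}_2[x]$. Every $f \in \mathcal{I}_n$ is monic with constant term $1$; write $f = x^n + f_{n-1}x^{n-1} + \cdots + f_1 x + 1$ with $f_k \in \mathbb{F}_2$. $S_{1,1}(n)$ denotes the set of $f \in \mathcal{I}_n$ with $f_{n-1} = 1$ and $f_1 = 1$. *)

theory Defs
  imports "HOL-Library.Z2" "HOL-Computational_Algebra.Polynomial_Factorial"
begin

definition irred_polys :: "nat \<Rightarrow> bit poly set" where
  "irred_polys n = {f. irreducible f \<and> degree f = n \<and> lead_coeff f = 1}"

definition S11 :: "nat \<Rightarrow> bit poly set" where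
  "S11 n = {f \<in> irred_polys n. coeff f (n - 1) = 1 \<and> coeff f 1 = 1}"

end

(* Reversal f(x) -> x^n f(1/x) is an involution of S_{1,1}(n), so |S_{1,1}(n)| has the parity of
   the number of self-reciprocal members. A self-reciprocal polynomial of odd degree vanishes at 1,
   so for odd n there are none. For n = 2m the self-reciprocal polynomials of degree 2m are exactly
   the Q-transforms x^m g(x + 1/x) with deg g = m, and by Meyn's criterion x^m g(x + 1/x) is
   irreducible iff g is irreducible and g_1 = 1, i.e. the trace of 1/beta is 1 for a root beta of g.
   Comparing coefficients, the Q-transform maps S_{1,1}(m) bijectively onto the self-reciprocal part
   of S_{1,1}(2m); so |S_{1,1}(2m)| and |S_{1,1}(m)| have the same parity for m >= 2, and the
   induction ends at S_{1,1}(2) = {x^2 + x + 1}.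

   Computations in extensions of F_2 are carried out as congruences modulo an irreducible p in
   F_2[x], that is, in the field F_2[x]/(p), where x is a root of p. *)

theory Submission
  imports Defs "HOL-Library.Disjoint_Sets"
begin

section \<open>Characteristic two\<close>

lemma UNIV_bit: "(UNIV :: bit set) = {0, 1}"
  by (auto intro: bit.exhaust)

instance bit :: finite
  by standard (simp only: UNIV_bit finite.emptyI finite.insertI)

instance bit :: finite_field
  by (rule finite_fieldI) simp

lemma card_UNIV_bit [simp]: "card (UNIV :: bit set) = 2"
  unfolding UNIV_bit by simp

lemma CHAR_bit [simp]: "CHAR(bit) = 2"
  by (rule CHAR_eq_posI) (auto simp: less_2_cases_iff)

lemma bit_poly_two_eq_0: "(2 :: bit poly) = 0"
  using of_nat_CHAR[where 'a = "bit poly"] by simp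

lemma bit_poly_diff_eq_add: "(a :: bit poly) - b = a + b"
  by (rule minus_CHAR_2) simp

lemma bit_poly_add_self: "(a :: bit poly) + a = 0"
  by (metis bit_poly_diff_eq_add diff_self)

lemma bit_poly_add_power_two_power: "((a :: bit poly) + b) ^ 2 ^ k = a ^ 2 ^ k + b ^ 2 ^ k"
  by (rule freshmans_dream') simp_all

lemma bit_poly_add_square: "((a :: bit poly) + b)\<^sup>2 = a\<^sup>2 + b\<^sup>2"
  using bit_poly_add_power_two_power[of a b 1] by simp

section \<open>Congruences\<close>

lemma dvd_power_diff:
  fixes p a b :: "'a :: comm_ring_1"
  assumes "p dvd a - b"
  shows "p dvd a ^ n - b ^ n"
proof (induction n)
  case (Suc n)
  have "a ^ Suc n - b ^ Suc n = a * (a ^ n - b ^ n) + b ^ n * (a - b)"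
    by (simp add: algebra_simps)
  then show ?case
    using Suc assms by simp
qed simp

lemma dvd_power_power_diff_sub:
  fixes p c :: "'a :: comm_ring_1"
  assumes "l \<le> k" and "p dvd c ^ q ^ k - c" and "p dvd c ^ q ^ l - c"
  shows "p dvd c ^ q ^ (k - l) - c"
proof -
  have "c ^ q ^ k = (c ^ q ^ l) ^ q ^ (k - l)"
    using assms(1) by (simp flip: power_mult power_add)
  moreover have "p dvd (c ^ q ^ l) ^ q ^ (k - l) - c ^ q ^ (k - l)"
    using assms(3) by (rule dvd_power_diff)
  ultimately have "p dvd c ^ q ^ k - c ^ q ^ (k - l)"
    by simp
  from dvd_diff[OF assms(2) this] show ?thesis
    by simp
qed

lemma dvd_power_power_diff_gcd:
  fixes p c :: "'a :: comm_ring_1"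
  assumes "p dvd c ^ q ^ a - c" and "p dvd c ^ q ^ b - c"
  shows "p dvd c ^ q ^ gcd a b - c"
  using assms
proof (induction "a + b" arbitrary: a b rule: less_induct)
  case less
  consider "a = 0" | "b = 0" | "0 < b" "b \<le> a" | "0 < a" "a < b"
    by linarith
  then show ?case
  proof cases
    case 3
    then have "p dvd c ^ q ^ (a - b) - c"
      using less.prems by (intro dvd_power_power_diff_sub)
    then have "p dvd c ^ q ^ gcd (a - b) b - c"
      using 3 less by simp
    with 3 show ?thesis
      by (simp add: gcd_diff1_nat)
  next
    case 4
    then have "p dvd c ^ q ^ (b - a) - c"
      using less.prems by (intro dvd_power_power_diff_sub) simp_all
    then have "p dvd c ^ q ^ gcd a (b - a) - c"
      using 4 less by simp
    with 4 show ?thesis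
      by (metis gcd.commute gcd_diff1_nat less_imp_le)
  qed (simp_all add: less.prems)
qed

lemma dvd_power_square_exponent_diff:
  fixes p x :: "'a :: comm_ring_1"
  assumes inverse: "p dvd x * x ^ q - 1"
  shows "p dvd x ^ (q * q) - x"
proof -
  define u where "u = x ^ q"
  have "p dvd (x * u) ^ q - 1 ^ q"
    using inverse unfolding u_def by (rule dvd_power_diff)
  then have "p dvd u * u ^ q - 1"
    by (simp only: power_mult_distrib u_def power_one)
  then have "p dvd x * (u * u ^ q - 1) - u ^ q * (x * u - 1)"
    by (rule dvd_diff[OF dvd_mult dvd_mult[OF inverse[folded u_def]]])
  also have "x * (u * u ^ q - 1) - u ^ q * (x * u - 1) = u ^ q - x"
    by (simp add: algebra_simps)
  finally show ?thesis
    by (simp add: u_def flip: power_mult)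
qed

lemma prime_elem_dvd_prod_iff:
  assumes "prime_elem p" and "finite A"
  shows "p dvd prod f A \<longleftrightarrow> (\<exists>x\<in>A. p dvd f x)"
  using assms(2)
proof induction
  case empty
  then show ?case
    using assms(1) by (simp add: prime_elem_not_unit)
next
  case (insert x A)
  then show ?case
    by (simp add: prime_elem_dvd_mult_iff[OF assms(1)])
qed

lemma not_dvd_if_dvd_diff_1:
  fixes p q f :: "'a :: comm_ring_1"
  assumes "prime_elem p" and "p dvd f" and "q dvd f - 1"
  shows "\<not> p dvd q"
proof
  assume "p dvd q"
  then have "p dvd f - 1"
    using assms(3) by (rule dvd_trans)
  with assms(2) have "p dvd f - (f - 1)"
    by (rule dvd_diff)
  with assms(1) show False
    by (simp add: prime_elem_not_unit)
qed

lemma not_dvd_if_inverse_mod: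
  fixes p a b :: "'a :: comm_ring_1"
  assumes "prime_elem p" and "p dvd a * b - 1"
  shows "\<not> p dvd a"
proof
  assume "p dvd a"
  from dvd_diff[OF dvd_mult2[OF this] assms(2)] have "p dvd a * b - (a * b - 1)" .
  with assms(1) show False
    by (simp add: prime_elem_not_unit)
qed

text \<open>Read modulo \<open>p\<close>, with \<open>w = 1 / (x + 1)\<close> and \<open>w' = 1 / (u + 1)\<close>: if \<open>u = x\<close> then
  \<open>u / (u + 1) = x / (x + 1)\<close>, and if \<open>u = 1 / x\<close> then \<open>u / (u + 1) + x / (x + 1) = 1\<close>.\<close>

lemma dvd_frac_succ_diff:
  fixes p u x w w' :: "'a :: comm_ring_1"
  assumes "p dvd u - x" and "p dvd (x + 1) * w - 1" and "p dvd (u + 1) * w' - 1"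
  shows "p dvd u * w' - x * w"
proof -
  have "u * w' - x * w = w' * (u - x) + x * (w * ((u + 1) * w' - 1) - w' * ((x + 1) * w - 1)
      - w * w' * (u - x))"
    by (simp add: algebra_simps)
  then show ?thesis
    using assms by (simp add: dvd_add dvd_diff dvd_mult)
qed

lemma dvd_frac_succ_inverse:
  fixes p u x w w' :: "'a :: comm_ring_1"
  assumes "p dvd x * u - 1" and "p dvd (x + 1) * w - 1" and "p dvd (u + 1) * w' - 1"
  shows "p dvd u * w' + x * w - 1"
proof -
  have identity: "u * w' + x * w - 1 = w * (w' * (x * u - 1) + ((u + 1) * w' - 1)) + ((x + 1) * w - 1)
      - u * w' * ((x + 1) * w - 1)"
    by (simp add: algebra_simps)
  show ?thesis
    unfolding identity
    by (rule dvd_diff[OF dvd_add[OF dvd_mult[OF dvd_add[OF dvd_mult[OF assms(1)] assms(3)]] assms(2)]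
        dvd_mult[OF assms(2)]])
qed

lemma dvd_double_cases:
  fixes m d :: nat
  assumes "m dvd d" and "d dvd 2 * m" and "m > 0"
  shows "d = m \<or> d = 2 * m"
proof -
  obtain t where t: "d = m * t"
    using assms(1) ..
  with assms(2,3) have "t dvd 2"
    by (simp add: mult.commute[of m])
  then have "t = 1 \<or> t = 2"
    using dvd_imp_le[of t 2] by (cases "t = 0") auto
  with t show ?thesis
    by auto
qed

section \<open>Polynomials over finite fields\<close>

lemma finite_polys_degree_le: "finite {p :: 'a :: {zero, finite} poly. degree p \<le> n}"
proof (rule finite_subset)
  show "{p :: 'a poly. degree p \<le> n} \<subseteq> Poly ` {xs. set xs \<subseteq> UNIV \<and> length xs \<le> Suc n}"
  proof
    fix p :: "'a poly"
    assume "p \<in> {p. degree p \<le> n}"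
    then have "length (coeffs p) \<le> Suc n"
      by (cases "p = 0") (simp_all add: length_coeffs_degree)
    then show "p \<in> Poly ` {xs. set xs \<subseteq> UNIV \<and> length xs \<le> Suc n}"
      by (intro image_eqI[of _ _ "coeffs p"]) simp_all
  qed
qed (intro finite_imageI finite_lists_length_le finite)

lemma finite_polys_degree_less: "finite {p :: 'a :: {zero, finite} poly. degree p < n}"
  by (rule finite_subset[OF _ finite_polys_degree_le[of n]]) auto

lemma card_polys_degree_less:
  assumes "d \<ge> 1"
  shows "card {p :: 'a :: {zero, finite} poly. degree p < d} = card (UNIV :: 'a set) ^ d"
proof -
  let ?L = "{xs :: 'a list. set xs \<subseteq> UNIV \<and> length xs = d}"
  have "{p :: 'a poly. degree p < d} = Poly ` ?L"
  proof (intro equalityI subsetI)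
    fix p :: "'a poly"
    assume "p \<in> {p. degree p < d}"
    then have "Poly (map (coeff p) [0..<d]) = p"
      by (intro poly_eqI) (auto simp: nth_default_def coeff_eq_0)
    then show "p \<in> Poly ` ?L"
      by (intro image_eqI[of _ _ "map (coeff p) [0..<d]"]) simp_all
  next
    fix p
    assume "p \<in> Poly ` ?L"
    then obtain xs where "p = Poly xs" and "length xs = d"
      by blast
    then have "degree p \<le> d - 1"
      by (intro degree_le) (auto simp: nth_default_def)
    with assms show "p \<in> {p. degree p < d}"
      by simp
  qed
  moreover have "inj_on Poly ?L"
  proof (rule inj_onI)
    fix xs ys
    assume "xs \<in> ?L" "ys \<in> ?L" "Poly xs = Poly ys"
    then show "xs = ys"
      by (metis (mono_tags, lifting) coeff_Poly_eq mem_Collect_eq nth_default_nth nth_equalityI)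
  qed
  ultimately show ?thesis
    using card_lists_length_eq[of "UNIV :: 'a set" d] by (simp add: card_image)
qed

lemma irreducible_degree_pos: "irreducible (p :: 'a :: field poly) \<Longrightarrow> 0 < degree p"
  by (auto simp: irreducible_def is_unit_iff_degree)

lemma coeff_0_irreducible:
  fixes g :: "'a :: field poly"
  assumes "irreducible g" and "degree g \<ge> 2"
  shows "coeff g 0 \<noteq> 0"
  using assms root_imp_reducible_poly[of g 0] by (auto simp: poly_0_coeff_0)

lemma exists_irreducible_factor:
  fixes a :: "'a :: field poly"
  assumes "degree a \<ge> 1"
  shows "\<exists>p. irreducible p \<and> p dvd a"
  using assms
proof (induction "degree a" arbitrary: a rule: less_induct)
  case less
  show ?case
  proof (cases "irreducible a")
    case False
    moreover have "a \<noteq> 0"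
      using less.prems by auto
    moreover have "\<not> is_unit a"
      using less.prems \<open>a \<noteq> 0\<close> by (simp add: is_unit_iff_degree)
    ultimately obtain b c where bc: "a = b * c" "\<not> is_unit b" "\<not> is_unit c"
      by (auto simp: irreducible_def)
    then have "b \<noteq> 0" "c \<noteq> 0" and "degree b \<ge> 1" "degree c \<ge> 1"
      using \<open>a \<noteq> 0\<close> by (auto simp: is_unit_iff_degree)
    then have "degree b < degree a"
      by (simp add: bc(1) degree_mult_eq)
    with less.hyps \<open>degree b \<ge> 1\<close> obtain p where "irreducible p" "p dvd b"
      by blast
    with bc(1) show ?thesis
      by (blast intro: dvd_mult2)
  qed auto
qed

lemma prime_elem_dvd_const_diff:
  fixes p :: "'a :: field poly"
  assumes "prime_elem p" and "p dvd [:a:] - [:b:]"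
  shows "a = b"
proof (rule ccontr)
  assume "a \<noteq> b"
  then have "is_unit ([:a:] - [:b:])"
    by (simp add: is_unit_iff_degree)
  with assms show False
    by (metis dvd_unit_imp_unit prime_elem_not_unit)
qed

lemma bij_betw_mult_mod_nonzero_residues:
  fixes p b :: "'a :: finite_field poly"
  assumes prime: "prime_elem p" and b: "\<not> p dvd b"
  defines "U \<equiv> {u. degree u < degree p} - {0}"
  shows "bij_betw (\<lambda>u. b * u mod p) U U"
proof -
  have "p \<noteq> 0"
    using prime by auto
  have U_not_dvd: "\<not> p dvd u" if "u \<in> U" for u
    using that dvd_imp_degree_le[of p u] by (auto simp: U_def)
  have "finite U"
    by (simp add: U_def finite_polys_degree_less)
  moreover have "(\<lambda>u. b * u mod p) ` U \<subseteq> U"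
  proof
    fix v
    assume "v \<in> (\<lambda>u. b * u mod p) ` U"
    then obtain u where "u \<in> U" and v: "v = b * u mod p"
      by blast
    then have "\<not> p dvd b * u"
      using U_not_dvd b prime by (simp add: prime_elem_dvd_mult_iff)
    then show "v \<in> U"
      using degree_mod_less[OF \<open>p \<noteq> 0\<close>, of "b * u"] by (auto simp: U_def v mod_eq_0_iff_dvd)
  qed
  moreover have "inj_on (\<lambda>u. b * u mod p) U"
  proof (rule inj_onI)
    fix u v
    assume "u \<in> U" "v \<in> U" "b * u mod p = b * v mod p"
    then have "p dvd b * (u - v)"
      by (simp add: mod_eq_dvd_iff right_diff_distrib)
    then have "p dvd u - v"
      using b prime by (simp add: prime_elem_dvd_mult_iff)
    moreover have "degree (u - v) < degree p"
      using \<open>u \<in> U\<close> \<open>v \<in> U\<close> by (auto simp: U_def intro: le_less_trans[OF degree_diff_le_max])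
    ultimately show "u = v"
      using dvd_imp_degree_le[of p "u - v"] by auto
  qed
  ultimately show ?thesis
    by (simp add: bij_betw_def endo_inj_surj)
qed

lemma fermat_little_poly_unit:
  fixes p b :: "'a :: finite_field poly"
  assumes p: "irreducible p" and b: "\<not> p dvd b"
  shows "p dvd b ^ (card (UNIV :: 'a set) ^ degree p - 1) - 1"
proof -
  define U where "U = {u :: 'a poly. degree u < degree p} - {0}"
  have prime: "prime_elem p"
    using p by (rule field_poly_irreducible_imp_prime)
  have "degree p \<ge> 1"
    using irreducible_degree_pos[OF p] by simp
  then have "(0 :: 'a poly) \<in> {u. degree u < degree p}"
    by simp
  then have card: "card U = card (UNIV :: 'a set) ^ degree p - 1"
    unfolding U_def using card_polys_degree_less[OF \<open>degree p \<ge> 1\<close>, where 'a = 'a]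
    by (simp add: card_Diff_singleton)
  have "finite U"
    by (simp add: U_def finite_polys_degree_less)
  have "(\<Prod>u\<in>U. b * u mod p) = \<Prod>U"
    using bij_betw_mult_mod_nonzero_residues[OF prime b, folded U_def] by (rule prod.reindex_bij_betw)
  then have "\<Prod>U mod p = (\<Prod>u\<in>U. b * u) mod p"
    by (metis mod_prod_eq)
  then have "p dvd (b ^ card U - 1) * \<Prod>U"
    by (simp add: prod.distrib mod_eq_dvd_iff left_diff_distrib dvd_diff_commute)
  moreover have "\<not> p dvd u" if "u \<in> U" for u
    using that dvd_imp_degree_le[of p u] by (auto simp: U_def)
  then have "\<not> p dvd \<Prod>U"
    by (simp add: prime_elem_dvd_prod_iff[OF prime \<open>finite U\<close>])
  ultimately show ?thesis
    using prime by (simp add: prime_elem_dvd_mult_iff card)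
qed

lemma fermat_little_poly:
  fixes p a :: "'a :: finite_field poly"
  assumes "irreducible p"
  shows "p dvd a ^ (card (UNIV :: 'a set) ^ degree p) - a"
proof (cases "p dvd a")
  case True
  have "a dvd a ^ (card (UNIV :: 'a set) ^ degree p)"
    using finite_UNIV_card_ge_0[where 'a = 'a] by simp
  with True show ?thesis
    by (blast intro: dvd_diff dvd_trans)
next
  case False
  define N where "N = card (UNIV :: 'a set) ^ degree p - 1"
  have "card (UNIV :: 'a set) ^ degree p = Suc N"
    using finite_UNIV_card_ge_0[where 'a = 'a] by (simp add: N_def)
  then have "a ^ (card (UNIV :: 'a set) ^ degree p) - a = a * (a ^ N - 1)"
    by (simp add: algebra_simps)
  then show ?thesis
    using fermat_little_poly_unit[OF assms False] by (simp add: N_def)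
qed

lemma exists_inverse_mod_irreducible:
  fixes p b :: "'a :: finite_field poly"
  assumes "irreducible p" and "\<not> p dvd b"
  shows "\<exists>i. p dvd b * i - 1"
proof -
  define N where "N = card (UNIV :: 'a set) ^ degree p - 1"
  have "2 \<le> card (UNIV :: 'a set)"
    using card_mono[of "UNIV :: 'a set" "{0, 1}"] by simp
  then have "2 \<le> card (UNIV :: 'a set) ^ degree p"
    using self_le_power[of "card (UNIV :: 'a set)" "degree p"] irreducible_degree_pos[OF assms(1)]
    by linarith
  then have "Suc (N - 1) = N"
    by (simp add: N_def)
  then have "b * b ^ (N - 1) = b ^ N"
    by (metis power_Suc)
  then show ?thesis
    using fermat_little_poly_unit[OF assms] by (metis N_def)
qed

lemma pcompose_X_power: "pcompose ([:0, 1:] ^ n) c = c ^ n"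
  by (induction n) (simp_all add: pcompose_mult pcompose_pCons pcompose_1)

lemma fermat_little_poly_root:
  fixes g p c :: "'a :: finite_field poly"
  assumes "irreducible g" and "p dvd pcompose g c"
  shows "p dvd c ^ (card (UNIV :: 'a set) ^ degree g) - c"
proof -
  let ?N = "card (UNIV :: 'a set) ^ degree g"
  obtain r where "[:0, 1:] ^ ?N - [:0, 1:] = g * r"
    using fermat_little_poly[OF assms(1), of "[:0, 1:]"] by (elim dvdE)
  then have "c ^ ?N - c = pcompose g c * pcompose r c"
    by (metis pcompose_diff pcompose_mult pcompose_X_power power_one_right)
  then show ?thesis
    using assms(2) by simp
qed

lemma pcompose_eq_sum_atMost:
  assumes "degree a \<le> n"
  shows "pcompose a q = (\<Sum>i\<le>n. smult (coeff a i) (q ^ i))"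
proof -
  have "pcompose a q = (\<Sum>i\<le>degree a. smult (coeff a i) (q ^ i))"
    unfolding pcompose_altdef poly_altdef by (simp add: coeff_map_poly degree_map_poly)
  also have "\<dots> = (\<Sum>i\<le>n. smult (coeff a i) (q ^ i))"
    by (rule sum.mono_neutral_left) (use assms in \<open>auto simp: coeff_eq_0\<close>)
  finally show ?thesis .
qed

lemma reflect_poly_cong:
  fixes p b c g :: "'a :: idom poly"
  assumes inverse: "p dvd b * c - 1"
  shows "p dvd b ^ degree g * pcompose (reflect_poly g) c - pcompose g b"
proof -
  let ?m = "degree g"
  have "pcompose (reflect_poly g) c = (\<Sum>j\<le>?m. smult (coeff g (?m - j)) (c ^ j))"
    unfolding pcompose_eq_sum_atMost[OF degree_reflect_poly_le]
    by (intro sum.cong refl) (simp add: coeff_reflect_poly)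
  moreover have "pcompose g b = (\<Sum>j\<le>?m. smult (coeff g (?m - j)) (b ^ (?m - j)))"
    unfolding pcompose_eq_sum_atMost[OF order_refl]
    by (rule sum.reindex_bij_witness[of _ "\<lambda>j. ?m - j" "\<lambda>j. ?m - j"]) auto
  ultimately have "b ^ ?m * pcompose (reflect_poly g) c - pcompose g b =
      (\<Sum>j\<le>?m. smult (coeff g (?m - j)) (b ^ (?m - j) * ((b * c) ^ j - 1 ^ j)))"
    by (auto simp: sum_distrib_left smult_diff_right sum_subtractf power_mult_distrib
        right_diff_distrib intro!: sum.cong simp flip: mult.assoc power_add)
  also have "p dvd \<dots>"
    using inverse by (intro dvd_sum dvd_smult dvd_mult dvd_power_diff) simp
  finally show ?thesis .
qed

lemma irreducible_reflect_poly:
  fixes g :: "'a :: field poly"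
  assumes g: "irreducible g" and "coeff g 0 \<noteq> 0"
  shows "irreducible (reflect_poly g)"
proof -
  have unit_iff: "is_unit (reflect_poly a) \<longleftrightarrow> is_unit a" if "coeff a 0 \<noteq> 0" for a :: "'a poly"
  proof -
    have "a \<noteq> 0" and "reflect_poly a \<noteq> 0"
      using that by auto
    then show ?thesis
      using that by (simp add: is_unit_iff_degree)
  qed
  show ?thesis
  proof (rule irreducibleI)
    show "reflect_poly g \<noteq> 0" and "\<not> is_unit (reflect_poly g)"
      using g assms(2) unit_iff[of g] by (auto simp: irreducible_def)
  next
    fix a b
    assume ab: "reflect_poly g = a * b"
    have "coeff (reflect_poly g) 0 \<noteq> 0"
      using g by (simp add: irreducible_def)
    then have "coeff a 0 \<noteq> 0" and "coeff b 0 \<noteq> 0"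
      by (simp_all add: ab coeff_mult_0)
    moreover have "g = reflect_poly (reflect_poly g)"
      using assms(2) by simp
    then have "g = reflect_poly a * reflect_poly b"
      by (simp add: ab reflect_poly_mult)
    ultimately show "is_unit a \<or> is_unit b"
      using irreducibleD[OF g] unit_iff by blast
  qed
qed

lemma reflect_poly_eq_iff_coeff_sym:
  assumes "degree f = n"
  shows "reflect_poly f = f \<longleftrightarrow> (\<forall>k\<le>n. coeff f k = coeff f (n - k))"
proof
  assume "reflect_poly f = f"
  show "\<forall>k\<le>n. coeff f k = coeff f (n - k)"
  proof (intro allI impI)
    fix k
    assume "k \<le> n"
    have "coeff f k = coeff (reflect_poly f) k"
      using \<open>reflect_poly f = f\<close> by simp
    also have "\<dots> = coeff f (n - k)"
      using \<open>k \<le> n\<close> assms by (simp add: coeff_reflect_poly)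
    finally show "coeff f k = coeff f (n - k)" .
  qed
next
  assume sym: "\<forall>k\<le>n. coeff f k = coeff f (n - k)"
  show "reflect_poly f = f"
  proof (rule poly_eqI)
    fix k
    show "coeff (reflect_poly f) k = coeff f k"
    proof (cases "k \<le> n")
      case True
      then show ?thesis
        using sym[rule_format, OF True] assms by (simp add: coeff_reflect_poly)
    qed (use assms in \<open>simp add: coeff_reflect_poly coeff_eq_0\<close>)
  qed
qed

section \<open>Conjugates modulo an irreducible polynomial\<close>

lemma coeff_mult_linear:
  "coeff (q * [:a, 1:]) j = a * coeff q j + (if j = 0 then 0 else coeff q (j - 1))"
  for q :: "'a :: comm_ring_1 poly"
  by (cases j) (simp_all add: mult_pCons_right)

lemma coeff_prod_linear_factors:
  fixes e :: "nat \<Rightarrow> 'a :: comm_ring_1"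
  shows "degree (\<Prod>i<n. [:e i, 1:]) \<le> n"
    and "coeff (\<Prod>i<n. [:e i, 1:]) n = 1"
    and "n \<ge> 1 \<Longrightarrow> coeff (\<Prod>i<n. [:e i, 1:]) (n - 1) = (\<Sum>i<n. e i)"
proof (induction n)
  case 0
  { case 1 show ?case by simp }
  { case 2 show ?case by simp }
  { case 3 then show ?case by simp }
next
  case (Suc n)
  have rec: "coeff (\<Prod>i<Suc n. [:e i, 1:]) j = e n * coeff (\<Prod>i<n. [:e i, 1:]) j +
      (if j = 0 then 0 else coeff (\<Prod>i<n. [:e i, 1:]) (j - 1))" for j
    by (simp only: prod.lessThan_Suc coeff_mult_linear)
  { case 1
    show ?case
      using Suc.IH(1) by (intro degree_le) (auto simp: rec coeff_eq_0) }
  { case 2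
    show ?case
      using Suc.IH(1,2) by (simp add: rec coeff_eq_0) }
  { case 3
    show ?case
    proof (cases "n = 0")
      case False
      then show ?thesis
        using Suc.IH(2,3) by (simp only: rec) (simp add: add.commute)
    qed simp }
qed

lemma coeff_prod_linear_factors_squares:
  fixes e :: "nat \<Rightarrow> bit poly"
  shows "coeff (\<Prod>i<n. [:(e i)\<^sup>2, 1:]) j = (coeff (\<Prod>i<n. [:e i, 1:]) j)\<^sup>2"
proof (induction n arbitrary: j)
  case 0
  then show ?case
    by (cases j) simp_all
next
  case (Suc n)
  then show ?case
    by (simp only: prod.lessThan_Suc coeff_mult_linear)
       (simp add: bit_poly_add_square power_mult_distrib)
qed

lemma dvd_poly_if_dvd_coeffs:
  fixes R :: "'a :: idom poly"
  assumes "\<And>j. p dvd coeff R j"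
  shows "p dvd poly R c"
proof -
  have "[:p:] dvd R"
    using assms by (simp add: const_poly_dvd_iff)
  then obtain S where "R = [:p:] * S"
    by (elim dvdE)
  then show ?thesis
    by simp
qed

lemma coeff_orbit_prod_square_mod:
  fixes p c :: "bit poly"
  assumes k: "k \<ge> 1" and fixed: "p dvd c ^ 2 ^ k - c"
  defines "Q \<equiv> \<Prod>i<k. [:c ^ 2 ^ i, 1:]"
  shows "p dvd (coeff Q j)\<^sup>2 - coeff Q j"
proof -
  obtain k' where k': "k = Suc k'"
    using k by (cases k) auto
  define M where "M = (\<Prod>i<k'. [:c ^ 2 ^ Suc i, 1:])"
  have square: "(c ^ 2 ^ i)\<^sup>2 = c ^ 2 ^ Suc i" for i
    by (simp flip: power_mult add: mult.commute)
  have "Q = [:c, 1:] * M"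
    unfolding Q_def M_def k' prod.lessThan_Suc_shift by simp
  moreover have "(\<Prod>i<k. [:(c ^ 2 ^ i)\<^sup>2, 1:]) = M * [:c ^ 2 ^ k, 1:]"
    unfolding M_def k' prod.lessThan_Suc square by simp
  ultimately have "(\<Prod>i<k. [:(c ^ 2 ^ i)\<^sup>2, 1:]) - Q = smult (c ^ 2 ^ k - c) M"
    by (simp add: smult_diff_left)
  then have "coeff (\<Prod>i<k. [:(c ^ 2 ^ i)\<^sup>2, 1:]) j - coeff Q j = (c ^ 2 ^ k - c) * coeff M j"
    by (metis coeff_diff coeff_smult)
  moreover have "coeff (\<Prod>i<k. [:(c ^ 2 ^ i)\<^sup>2, 1:]) j = (coeff Q j)\<^sup>2"
    unfolding Q_def by (rule coeff_prod_linear_factors_squares)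
  ultimately show ?thesis
    using fixed by simp
qed

lemma dvd_diff_const_if_idempotent_mod:
  fixes p t :: "bit poly"
  assumes p: "prime_elem p" and "p dvd t\<^sup>2 - t"
  shows "p dvd t - [:if p dvd t then 0 else 1:]"
proof (cases "p dvd t")
  case False
  have "p dvd t * (t - 1)"
    using assms(2) by (simp add: power2_eq_square algebra_simps)
  with False p have "p dvd t - 1"
    by (simp add: prime_elem_dvd_mult_iff)
  with False show ?thesis
    by (simp add: pCons_one)
qed simp

text \<open>Modulo \<open>p\<close>, the coefficients of \<open>\<Prod>i<k. X + c ^ 2 ^ i\<close> are fixed by squaring, which
  merely permutes the factors; so they are congruent to constants from \<open>\<bbbF>\<^sub>2\<close>.\<close>

lemma exists_orbit_poly:
  fixes p c :: "bit poly"
  assumes p: "prime_elem p" and k: "k \<ge> 1" and fixed: "p dvd c ^ 2 ^ k - c"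
  shows "\<exists>P. degree P = k \<and> lead_coeff P = 1 \<and> p dvd pcompose P c \<and>
           p dvd [:coeff P (k - 1):] - (\<Sum>i<k. c ^ 2 ^ i)"
proof -
  define Q where "Q = (\<Prod>i<k. [:c ^ 2 ^ i, 1:])"
  define P where "P = map_poly (\<lambda>t. if p dvd t then 0 else 1 :: bit) Q"
  have coeff_P: "coeff P j = (if p dvd coeff Q j then 0 else 1)" for j
    by (simp add: P_def coeff_map_poly)
  have coeff_Q_P: "p dvd coeff Q j - [:coeff P j:]" for j
    unfolding coeff_P Q_def
    by (rule dvd_diff_const_if_idempotent_mod[OF p coeff_orbit_prod_square_mod[OF k fixed]])
  have "\<not> p dvd 1"
    using p by (simp add: prime_elem_not_unit)
  then have coeff_P_k: "coeff P k = 1"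
    by (simp add: coeff_P Q_def coeff_prod_linear_factors(2))
  have "degree Q \<le> k"
    unfolding Q_def by (rule coeff_prod_linear_factors(1))
  then have "degree P \<le> k"
    by (intro degree_le) (auto simp: coeff_P coeff_eq_0)
  then have "degree P = k"
    using le_degree[of P k] coeff_P_k by simp
  moreover have "p dvd pcompose P c"
  proof -
    have "p dvd poly (Q - map_poly (\<lambda>a. [:a:]) P) c"
      using coeff_Q_P by (intro dvd_poly_if_dvd_coeffs) (simp add: coeff_map_poly)
    moreover have "poly Q c = 0"
      using k by (auto simp: Q_def poly_prod bit_poly_add_self intro!: bexI[of _ 0])
    ultimately show ?thesis
      by (simp add: pcompose_altdef)
  qed
  moreover have "p dvd [:coeff P (k - 1):] - (\<Sum>i<k. c ^ 2 ^ i)"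
    using coeff_Q_P[of "k - 1"] coeff_prod_linear_factors(3)[OF k, of "\<lambda>i. c ^ 2 ^ i"]
    by (simp add: Q_def dvd_diff_commute)
  ultimately show ?thesis
    using coeff_P_k by auto
qed

lemma irreducible_dvd_of_common_root_mod:
  fixes G P p c :: "'a :: field poly"
  assumes G: "irreducible G" and p: "prime_elem p"
    and G_root: "p dvd pcompose G c" and P_root: "p dvd pcompose P c"
  shows "G dvd P"
proof -
  define roots where "roots = {h. h \<noteq> 0 \<and> p dvd pcompose h c}"
  have "G \<in> roots"
    using G G_root by (auto simp: roots_def)
  then obtain h where h: "h \<in> roots" and h_min: "\<And>h'. h' \<in> roots \<Longrightarrow> degree h \<le> degree h'"
    using ex_has_least_nat[of "\<lambda>h. h \<in> roots" G degree] by blast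
  have "degree h \<noteq> 0"
  proof
    assume "degree h = 0"
    then have "is_unit (pcompose h c)"
      using h by (auto simp: roots_def is_unit_iff_degree elim!: degree_eq_zeroE)
    with h p show False
      by (auto simp: roots_def dest: dvd_unit_imp_unit prime_elem_not_unit)
  qed
  have h_dvd: "h dvd f" if "p dvd pcompose f c" for f
  proof (rule ccontr)
    assume "\<not> h dvd f"
    then have "f mod h \<noteq> 0"
      by (simp add: mod_eq_0_iff_dvd)
    moreover have "pcompose (f mod h) c = pcompose f c - pcompose h c * pcompose (f div h) c"
      by (simp flip: pcompose_mult pcompose_diff add: minus_div_mult_eq_mod[symmetric] mult.commute)
    ultimately have "f mod h \<in> roots"
      using h that by (auto simp: roots_def)
    with h_min have "degree h \<le> degree (f mod h)"
      by blast
    moreover have "degree (f mod h) < degree h"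
      using degree_mod_less[of h f] \<open>f mod h \<noteq> 0\<close> h by (auto simp: roots_def)
    ultimately show False
      by simp
  qed
  have "\<not> is_unit h"
    using \<open>degree h \<noteq> 0\<close> h by (auto simp: roots_def is_unit_iff_degree)
  then have "G dvd h"
    using irreducibleD'[OF G h_dvd[OF G_root]] by blast
  then show ?thesis
    using h_dvd[OF P_root] by (rule dvd_trans)
qed

lemma degree_le_if_root_mod_power_fixed:
  fixes G p c :: "bit poly"
  assumes "irreducible G" and "prime_elem p" and "p dvd pcompose G c"
    and "k \<ge> 1" and "p dvd c ^ 2 ^ k - c"
  shows "degree G \<le> k"
proof -
  obtain P where P: "degree P = k" "lead_coeff P = 1" "p dvd pcompose P c"
    using exists_orbit_poly[OF assms(2,4,5)] by blast
  then have "G dvd P"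
    using irreducible_dvd_of_common_root_mod assms(1-3) by blast
  with P show ?thesis
    by (metis dvd_imp_degree_le one_neq_zero leading_coeff_0_iff)
qed

lemma degree_dvd_if_root_mod_power_fixed:
  fixes G p c :: "bit poly"
  assumes G: "irreducible G" and p: "irreducible p" and root: "p dvd pcompose G c"
    and "k \<ge> 1" and fixed: "p dvd c ^ 2 ^ k - c"
  shows "degree G dvd k"
proof -
  have "p dvd c ^ 2 ^ degree G - c"
    using fermat_little_poly_root[OF G root] by simp
  then have "p dvd c ^ 2 ^ gcd (degree G) k - c"
    using fixed by (rule dvd_power_power_diff_gcd)
  then have "degree G \<le> gcd (degree G) k"
    using degree_le_if_root_mod_power_fixed[OF G field_poly_irreducible_imp_prime[OF p] root]
      \<open>k \<ge> 1\<close> by (simp add: Suc_le_eq)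
  then have "gcd (degree G) k = degree G"
    using gcd_le1_nat[of "degree G" k] irreducible_degree_pos[OF G] by linarith
  then show ?thesis
    by (metis gcd_dvd2)
qed

lemma trace_coeff_mod:
  fixes G p c :: "bit poly"
  assumes "irreducible G" and "lead_coeff G = 1" and "prime_elem p" and "p dvd pcompose G c"
  shows "p dvd [:coeff G (degree G - 1):] - (\<Sum>i<degree G. c ^ 2 ^ i)"
proof -
  let ?k = "degree G"
  have "?k \<ge> 1"
    using irreducible_degree_pos[OF assms(1)] by simp
  moreover have "p dvd c ^ 2 ^ ?k - c"
    using fermat_little_poly_root[OF assms(1,4)] by simp
  ultimately obtain P where P: "degree P = ?k" "lead_coeff P = 1" "p dvd pcompose P c"
    "p dvd [:coeff P (?k - 1):] - (\<Sum>i<?k. c ^ 2 ^ i)"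
    using exists_orbit_poly[OF assms(3)] by blast
  have "G dvd P"
    using irreducible_dvd_of_common_root_mod assms(1,3,4) P(3) by blast
  then obtain r where r: "P = G * r"
    by (elim dvdE)
  have "G \<noteq> 0" and "r \<noteq> 0"
    using P(2) r assms(2) by auto
  then have "degree r = 0"
    using P(1) r by (simp add: degree_mult_eq)
  moreover have "lead_coeff r = 1"
    using P(2) assms(2) unfolding r by (metis lead_coeff_mult mult_1)
  ultimately have "r = 1"
    by (metis degree_0_id one_pCons)
  with P(4) r show ?thesis
    by simp
qed

section \<open>The Q-transform\<close>

text \<open>For \<open>degree a \<le> r\<close> this is \<open>x ^ r * a(x + 1/x)\<close>.\<close>

definition Q_transform :: "nat \<Rightarrow> 'a :: idom poly \<Rightarrow> 'a poly" where
  "Q_transform r a = (\<Sum>j\<le>r. smult (coeff a j) (monom 1 (r - j) * [:1, 0, 1:] ^ j))"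

lemma degree_x2_plus_1_power: "degree ([:1, 0, 1:] ^ j :: 'a :: idom poly) = 2 * j"
  by (subst degree_power_eq) auto

lemma coeff_x2_plus_1_power_0: "coeff ([:1, 0, 1:] ^ j :: 'a :: idom poly) 0 = 1"
  by (simp add: coeff_0_power)

lemma coeff_x2_plus_1_power_1: "coeff ([:1, 0, 1:] ^ j :: 'a :: idom poly) 1 = 0"
  by (induction j) simp_all

lemma coeff_x2_plus_1_power_sym:
  assumes "i \<le> 2 * j"
  shows "coeff ([:1, 0, 1:] ^ j :: 'a :: idom poly) i = coeff ([:1, 0, 1:] ^ j) (2 * j - i)"
proof -
  have "reflect_poly ([:1, 0, 1:] :: 'a poly) = [:1, 0, 1:]"
    by (simp add: reflect_poly_def)
  then have "reflect_poly ([:1, 0, 1:] ^ j :: 'a poly) = [:1, 0, 1:] ^ j"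
    by (simp add: reflect_poly_power)
  then have "coeff ([:1, 0, 1:] ^ j :: 'a poly) i = coeff (reflect_poly ([:1, 0, 1:] ^ j)) i"
    by simp
  with assms show ?thesis
    by (simp add: coeff_reflect_poly degree_x2_plus_1_power)
qed

lemma coeff_Q_term_sym:
  assumes "j \<le> r" and "k \<le> 2 * r"
  shows "coeff (monom 1 (r - j) * [:1, 0, 1:] ^ j :: 'a :: idom poly) k =
         coeff (monom 1 (r - j) * [:1, 0, 1:] ^ j) (2 * r - k)"
proof -
  have "coeff ([:1, 0, 1:] ^ j :: 'a poly) i = 0" if "i > 2 * j" for i
    using that by (intro coeff_eq_0) (simp add: degree_x2_plus_1_power)
  moreover have "coeff ([:1, 0, 1:] ^ j :: 'a poly) (k - (r - j)) =
                 coeff ([:1, 0, 1:] ^ j) (2 * r - k - (r - j))" if "r - j \<le> k" "k \<le> r + j"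
  proof -
    have i: "k - (r - j) \<le> 2 * j" and "2 * j - (k - (r - j)) = 2 * r - k - (r - j)"
      using that assms by arith+
    then show ?thesis
      using coeff_x2_plus_1_power_sym[OF i, where 'a = 'a] by simp
  qed
  ultimately show ?thesis
    using assms by (auto simp: coeff_monom_mult)
qed

lemma coeff_Q_term_top:
  assumes "j \<le> r" and "n \<ge> r + j"
  shows "coeff (monom 1 (r - j) * [:1, 0, 1:] ^ j :: 'a :: idom poly) n = (if n = r + j then 1 else 0)"
  using assms lead_coeff_power[of "[:1, 0, 1:] :: 'a poly" j] degree_x2_plus_1_power[where 'a = 'a, of j]
  by (auto simp: coeff_monom_mult coeff_eq_0 mult_2)

lemma coeff_Q_transform:
  "coeff (Q_transform r a) k = (\<Sum>j\<le>r. coeff a j * coeff (monom 1 (r - j) * [:1, 0, 1:] ^ j) k)"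
  by (simp add: Q_transform_def coeff_sum)

lemma coeff_0_Q_transform: "coeff (Q_transform r a) 0 = coeff a r"
proof -
  have "coeff (Q_transform r a) 0 = (\<Sum>j\<le>r. if j = r then coeff a r else 0)"
    unfolding coeff_Q_transform
    by (intro sum.cong refl) (auto simp: coeff_monom_mult coeff_x2_plus_1_power_0)
  then show ?thesis
    by simp
qed

lemma coeff_1_Q_transform:
  assumes "r \<ge> 1"
  shows "coeff (Q_transform r a) 1 = coeff a (r - 1)"
proof -
  have "coeff (Q_transform r a) 1 = (\<Sum>j\<le>r. if j = r - 1 then coeff a (r - 1) else 0)"
    unfolding coeff_Q_transform using assms
    by (intro sum.cong refl)
       (auto simp: coeff_monom_mult coeff_x2_plus_1_power_0 coeff_x2_plus_1_power_1[unfolded One_nat_def]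
          le_Suc_eq)
  then show ?thesis
    using assms by simp
qed

lemma coeff_Q_transform_sym:
  assumes "k \<le> 2 * r"
  shows "coeff (Q_transform r a) k = coeff (Q_transform r a) (2 * r - k)"
  unfolding coeff_Q_transform using assms by (intro sum.cong refl) (metis atMost_iff coeff_Q_term_sym)

lemma Q_transform_add: "Q_transform r (a + b) = Q_transform r a + Q_transform r b"
  by (simp add: Q_transform_def smult_add_left sum.distrib)

lemma Q_transform_diff: "Q_transform r (a - b) = Q_transform r a - Q_transform r b"
  by (simp add: Q_transform_def smult_diff_left sum_subtractf)

lemma Q_transform_monom: "Q_transform r (monom c r) = smult c ([:1, 0, 1:] ^ r)"
proof -
  have "Q_transform r (monom c r) = (\<Sum>j\<le>r. if j = r then smult c ([:1, 0, 1:] ^ r) else 0)"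
    unfolding Q_transform_def by (intro sum.cong refl) (auto simp: coeff_monom)
  then show ?thesis
    by simp
qed

lemma Q_transform_Suc:
  assumes "degree a \<le> r"
  shows "Q_transform (Suc r) a = [:0, 1:] * Q_transform r a"
proof -
  have "Q_transform (Suc r) a = (\<Sum>j\<le>r. smult (coeff a j) (monom 1 (Suc r - j) * [:1, 0, 1:] ^ j))"
    using assms by (simp add: Q_transform_def coeff_eq_0)
  also have "\<dots> = (\<Sum>j\<le>r. [:0, 1:] * smult (coeff a j) (monom 1 (r - j) * [:1, 0, 1:] ^ j))"
    by (intro sum.cong refl) (simp add: Suc_diff_le monom_Suc)
  finally show ?thesis
    by (simp add: Q_transform_def sum_distrib_left)
qed

lemma coeff_Q_transform_top:
  assumes "degree a \<le> r" and "n \<ge> r + degree a"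
  shows "coeff (Q_transform r a) n = (if n = r + degree a then lead_coeff a else 0)"
proof -
  have "coeff (Q_transform r a) n =
        (\<Sum>j\<le>r. if j = degree a then lead_coeff a * (if n = r + degree a then 1 else 0) else 0)"
    unfolding coeff_Q_transform
  proof (intro sum.cong refl)
    fix j
    assume "j \<in> {..r}"
    then show "coeff a j * coeff (monom 1 (r - j) * [:1, 0, 1:] ^ j) n =
        (if j = degree a then lead_coeff a * (if n = r + degree a then 1 else 0) else 0)"
      using assms coeff_Q_term_top[of j r n] by (cases "j \<le> degree a") (auto simp: coeff_eq_0)
  qed
  then show ?thesis
    using assms(1) by simp
qed

lemma degree_Q_transform:
  assumes "a \<noteq> 0" and "degree a \<le> r"
  shows "degree (Q_transform r a) = r + degree a"
proof (rule antisym)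
  show "degree (Q_transform r a) \<le> r + degree a"
    using assms coeff_Q_transform_top[OF assms(2)] by (intro degree_le) auto
  show "r + degree a \<le> degree (Q_transform r a)"
    using assms coeff_Q_transform_top[OF assms(2)] by (intro le_degree) simp
qed

lemma lead_coeff_Q_transform:
  assumes "degree a \<le> r"
  shows "lead_coeff (Q_transform r a) = lead_coeff a"
proof (cases "a = 0")
  case False
  then show ?thesis
    using coeff_Q_transform_top[OF assms] degree_Q_transform[OF False assms] by simp
qed (simp add: Q_transform_def)

lemma Q_transform_eq_0_iff:
  "degree a \<le> r \<Longrightarrow> Q_transform r a = 0 \<longleftrightarrow> a = 0"
  by (metis lead_coeff_Q_transform leading_coeff_0_iff)

lemma inj_Q_transform: "inj_on (Q_transform r) {a. degree a \<le> r}"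
proof (rule inj_onI)
  fix a b :: "'a poly"
  assume "a \<in> {a. degree a \<le> r}" "b \<in> {a. degree a \<le> r}" "Q_transform r a = Q_transform r b"
  then have "degree (a - b) \<le> r" and "Q_transform r (a - b) = 0"
    by (auto simp: Q_transform_diff intro: order_trans[OF degree_diff_le_max])
  then show "a = b"
    by (simp add: Q_transform_eq_0_iff)
qed

lemma coeff_sym_pCons_0:
  fixes h :: "'a :: zero poly"
  assumes degree: "degree (pCons 0 h) \<le> 2 * Suc r"
    and sym: "\<And>k. k \<le> 2 * Suc r \<Longrightarrow> coeff (pCons 0 h) k = coeff (pCons 0 h) (2 * Suc r - k)"
  shows "degree h \<le> 2 * r" and "\<And>k. k \<le> 2 * r \<Longrightarrow> coeff h k = coeff h (2 * r - k)"
proof -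
  have top: "coeff (pCons 0 h) (2 * Suc r) = 0"
    using sym[of 0] by simp
  show "degree h \<le> 2 * r"
  proof (rule degree_le, intro allI impI)
    fix i
    assume "2 * r < i"
    then consider "Suc i = 2 * Suc r" | "2 * Suc r < Suc i"
      by (cases "Suc i = 2 * Suc r") auto
    then have "coeff (pCons 0 h) (Suc i) = 0"
    proof cases
      case 1
      then show ?thesis
        using top by simp
    next
      case 2
      then show ?thesis
        using degree by (intro coeff_eq_0) linarith
    qed
    then show "coeff h i = 0"
      by simp
  qed
  show "coeff h k = coeff h (2 * r - k)" if "k \<le> 2 * r" for k
    using sym[of "Suc k"] that by (simp add: Suc_diff_le)
qed

lemma Q_transform_surj:
  fixes f :: "'a :: idom poly"
  assumes "degree f \<le> 2 * r" and "\<And>k. k \<le> 2 * r \<Longrightarrow> coeff f k = coeff f (2 * r - k)"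
  shows "\<exists>a. degree a \<le> r \<and> f = Q_transform r a"
  using assms
proof (induction r arbitrary: f)
  case 0
  then have "degree f = 0"
    by simp
  then show ?case
    by (intro exI[of _ f]) (simp add: Q_transform_def degree_0_id)
next
  case (Suc r)
  let ?T = "[:1, 0, 1:] ^ Suc r :: 'a poly"
  define h where "h = f - smult (coeff f 0) ?T"
  have h_sym: "coeff h k = coeff h (2 * Suc r - k)" if "k \<le> 2 * Suc r" for k
    by (simp only: h_def coeff_diff coeff_smult Suc.prems(2)[OF that]
        coeff_x2_plus_1_power_sym[OF that])
  have "coeff h 0 = 0"
    by (simp add: h_def coeff_x2_plus_1_power_0)
  have "degree (smult (coeff f 0) ?T) \<le> 2 * Suc r"
    using degree_smult_le[of "coeff f 0" ?T] by (simp only: degree_x2_plus_1_power)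
  then have "degree h \<le> 2 * Suc r"
    unfolding h_def using Suc.prems(1) by (intro degree_diff_le)
  obtain h' where h: "h = pCons 0 h'"
    using \<open>coeff h 0 = 0\<close> by (cases h) auto
  obtain a where a: "degree a \<le> r" "h' = Q_transform r a"
    using Suc.IH coeff_sym_pCons_0[of h' r] \<open>degree h \<le> 2 * Suc r\<close> h_sym unfolding h by blast
  have "f = h + smult (coeff f 0) ?T"
    by (simp add: h_def)
  also have "h = Q_transform (Suc r) a"
    using Q_transform_Suc[OF a(1)] by (simp add: h a(2))
  also have "smult (coeff f 0) ?T = Q_transform (Suc r) (monom (coeff f 0) (Suc r))"
    by (rule Q_transform_monom[symmetric])
  also have "Q_transform (Suc r) a + \<dots> = Q_transform (Suc r) (a + monom (coeff f 0) (Suc r))"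
    by (rule Q_transform_add[symmetric])
  finally show ?case
    using a(1) by (intro exI[of _ "a + monom (coeff f 0) (Suc r)"])
      (auto intro: degree_add_le le_trans[OF degree_monom_le])
qed

lemma poly_Q_transform_1: "poly (Q_transform r a) 1 = coeff a 0" for a :: "bit poly"
proof -
  have "poly (Q_transform r a) 1 = (\<Sum>j\<le>r. if j = 0 then coeff a 0 else 0)"
    unfolding Q_transform_def poly_sum by (intro sum.cong refl) (auto simp: poly_monom zero_power)
  then show ?thesis
    by simp
qed

lemma Q_transform_cong:
  fixes p \<xi> a :: "'a :: idom poly"
  assumes inverse: "p dvd [:0, 1:] * \<xi> - 1" and "degree a \<le> r"
  shows "p dvd [:0, 1:] ^ r * pcompose a ([:0, 1:] + \<xi>) - Q_transform r a"
proof -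
  let ?x = "[:0, 1:] :: 'a poly"
  have "?x ^ r * (?x + \<xi>) ^ j = ?x ^ (r - j) * (?x * (?x + \<xi>)) ^ j" if "j \<le> r" for j
  proof -
    have "?x ^ r = ?x ^ (r - j) * ?x ^ j"
      using that by (simp flip: power_add)
    then show ?thesis
      by (simp only: power_mult_distrib mult.assoc)
  qed
  then have "?x ^ r * pcompose a (?x + \<xi>) =
      (\<Sum>j\<le>r. smult (coeff a j) (?x ^ (r - j) * (?x * (?x + \<xi>)) ^ j))"
    unfolding pcompose_eq_sum_atMost[OF assms(2)] sum_distrib_left by (intro sum.cong refl) simp
  moreover have "Q_transform r a = (\<Sum>j\<le>r. smult (coeff a j) (?x ^ (r - j) * [:1, 0, 1:] ^ j))"
    by (simp add: Q_transform_def monom_altdef)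
  ultimately have "?x ^ r * pcompose a (?x + \<xi>) - Q_transform r a =
      (\<Sum>j\<le>r. smult (coeff a j) (?x ^ (r - j) * ((?x * (?x + \<xi>)) ^ j - [:1, 0, 1:] ^ j)))"
    by (simp add: sum_subtractf smult_diff_right right_diff_distrib)
  also have "p dvd \<dots>"
  proof (intro dvd_sum dvd_smult dvd_mult dvd_power_diff)
    have "?x * (?x + \<xi>) - [:1, 0, 1:] = ?x * \<xi> - 1"
      by (simp add: algebra_simps one_pCons)
    then show "p dvd ?x * (?x + \<xi>) - [:1, 0, 1:]"
      using inverse by simp
  qed
  finally show ?thesis .
qed

lemma dvd_Q_transform_if_root:
  fixes p \<xi> a :: "'a :: idom poly"
  assumes "p dvd [:0, 1:] * \<xi> - 1" and "p dvd pcompose a ([:0, 1:] + \<xi>)"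
  shows "p dvd Q_transform (degree a) a"
proof -
  have "p dvd [:0, 1:] ^ degree a * pcompose a ([:0, 1:] + \<xi>)"
    using assms(2) by (rule dvd_mult)
  from dvd_diff[OF this Q_transform_cong[OF assms(1) order_refl[of "degree a"]]] show ?thesis
    by simp
qed

section \<open>Meyn's irreducibility criterion\<close>

lemma irreducible_factor_Q_transformD:
  fixes g p :: "bit poly"
  assumes g: "degree g = m" "m \<ge> 1" "coeff g 0 = 1"
    and p: "irreducible p" and p_dvd: "p dvd Q_transform m g"
  shows "\<not> p dvd [:0, 1:]" and "\<not> p dvd [:1, 1:]"
    and "\<exists>\<xi>. p dvd [:0, 1:] * \<xi> - 1 \<and> p dvd pcompose g ([:0, 1:] + \<xi>)"
proof -
  have prime: "prime_elem p"
    using p by (rule field_poly_irreducible_imp_prime)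
  have "g \<noteq> 0"
    using g by auto
  then have "coeff (Q_transform m g) 0 = 1"
    using g leading_coeff_neq_0[of g] by (simp add: coeff_0_Q_transform)
  then have "[:0, 1:] dvd Q_transform m g - 1"
    by (simp add: dvd_iff_poly_eq_0 poly_0_coeff_0)
  then show not_x: "\<not> p dvd [:0, 1:]"
    using prime p_dvd by (rule not_dvd_if_dvd_diff_1[rotated 2])
  have "[:1, 1:] dvd Q_transform m g - 1"
    using g by (simp add: dvd_iff_poly_eq_0 poly_Q_transform_1)
  then show "\<not> p dvd [:1, 1:]"
    using prime p_dvd by (rule not_dvd_if_dvd_diff_1[rotated 2])
  obtain \<xi> where \<xi>: "p dvd [:0, 1:] * \<xi> - 1"
    using exists_inverse_mod_irreducible[OF p not_x] by blast
  have "p dvd [:0, 1:] ^ m * pcompose g ([:0, 1:] + \<xi>) - Q_transform m g"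
    using Q_transform_cong[OF \<xi>] g by simp
  from dvd_add[OF this p_dvd] have "p dvd [:0, 1:] ^ m * pcompose g ([:0, 1:] + \<xi>)"
    by simp
  moreover have "\<not> p dvd [:0, 1:] ^ m"
    using not_x prime prime_elem_dvd_power by blast
  ultimately have "p dvd pcompose g ([:0, 1:] + \<xi>)"
    using prime by (simp add: prime_elem_dvd_mult_iff)
  with \<xi> show "\<exists>\<xi>. p dvd [:0, 1:] * \<xi> - 1 \<and> p dvd pcompose g ([:0, 1:] + \<xi>)"
    by blast
qed

text \<open>Here \<open>\<xi>\<close> stands for \<open>1/x\<close>. If \<open>\<beta> = x + 1/x\<close> is fixed by the \<open>m\<close>-fold Frobenius map,
  then \<open>u = x ^ 2 ^ m\<close> satisfies \<open>u + 1/u = x + 1/x\<close>, whence \<open>u = x\<close> or \<open>u = 1/x\<close>.\<close>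

lemma frobenius_dichotomy_mod:
  fixes p \<xi> :: "bit poly"
  assumes prime: "prime_elem p" and \<xi>: "p dvd [:0, 1:] * \<xi> - 1"
    and fixed: "p dvd ([:0, 1:] + \<xi>) ^ 2 ^ m - ([:0, 1:] + \<xi>)"
  shows "p dvd [:0, 1:] ^ 2 ^ m - [:0, 1:] \<or> p dvd [:0, 1:] * [:0, 1:] ^ 2 ^ m - 1"
proof -
  let ?x = "[:0, 1:] :: bit poly"
  define u v where "u = ?x ^ 2 ^ m" and "v = \<xi> ^ 2 ^ m"
  have sum: "p dvd u + v - (?x + \<xi>)"
    using fixed by (simp add: u_def v_def bit_poly_add_power_two_power)
  have "p dvd (?x * \<xi>) ^ 2 ^ m - 1 ^ 2 ^ m"
    using \<xi> by (rule dvd_power_diff)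
  then have prod: "p dvd u * v - 1"
    by (simp only: u_def v_def power_mult_distrib power_one)
  have identity: "(u - ?x) * (?x * u - 1) =
      ?x * u * (u + v - (?x + \<xi>)) - ?x * (u * v - 1) + u * (?x * \<xi> - 1)"
    by (simp add: algebra_simps)
  have "p dvd (u - ?x) * (?x * u - 1)"
    unfolding identity by (rule dvd_add[OF dvd_diff[OF dvd_mult[OF sum] dvd_mult[OF prod]] dvd_mult[OF \<xi>]])
  then show ?thesis
    using prime by (simp add: prime_elem_dvd_mult_iff u_def)
qed

lemma sum_frobenius_telescope:
  "(\<Sum>i<m. (\<delta>\<^sup>2 + \<delta>) ^ 2 ^ i) = \<delta> ^ 2 ^ m - (\<delta> :: bit poly)"
proof -
  have "(\<delta>\<^sup>2 + \<delta>) ^ 2 ^ i = \<delta> ^ 2 ^ Suc i - \<delta> ^ 2 ^ i" for i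
    by (simp add: bit_poly_add_power_two_power bit_poly_diff_eq_add mult.commute flip: power_mult)
  then have "(\<Sum>i<m. (\<delta>\<^sup>2 + \<delta>) ^ 2 ^ i) = (\<Sum>i<m. \<delta> ^ 2 ^ Suc i - \<delta> ^ 2 ^ i)"
    by simp
  also have "\<dots> = \<delta> ^ 2 ^ m - \<delta> ^ 2 ^ 0"
    by (rule sum_lessThan_telescope)
  finally show ?thesis
    by simp
qed

text \<open>The reversal of \<open>g\<close> is monic with root \<open>1/\<beta> = x/(x + 1)\<^sup>2 = \<delta>\<^sup>2 + \<delta>\<close>, where
  \<open>\<delta> = x/(x + 1) = x * w\<close>; so \<open>coeff g 1\<close> is the trace of \<open>\<delta>\<^sup>2 + \<delta>\<close>, which telescopes.\<close>

lemma coeff_1_trace_mod: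
  fixes g p \<xi> w :: "bit poly"
  assumes g: "irreducible g" "degree g = m" "coeff g 0 = 1"
    and prime: "prime_elem p" and root: "p dvd pcompose g ([:0, 1:] + \<xi>)"
    and \<xi>: "p dvd [:0, 1:] * \<xi> - 1" and w: "p dvd ([:0, 1:] + 1) * w - 1"
  shows "p dvd [:coeff g 1:] - (([:0, 1:] * w) ^ 2 ^ m - [:0, 1:] * w)"
proof -
  let ?x = "[:0, 1:] :: bit poly"
  define \<beta> c \<delta> where "\<beta> = ?x + \<xi>" and "c = ?x * w\<^sup>2" and "\<delta> = ?x * w"
  have "\<beta> * c - 1 = w\<^sup>2 * (?x * \<xi> - 1) + ((?x + 1) * w - 1) * ((?x + 1) * w + 1)"
    by (simp add: \<beta>_def c_def algebra_simps power2_eq_square bit_poly_two_eq_0)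
  then have \<beta>c: "p dvd \<beta> * c - 1"
    using \<xi> w by (simp add: dvd_add dvd_mult)
  define G where "G = reflect_poly g"
  have "m \<ge> 1"
    using irreducible_degree_pos[OF g(1)] g(2) by simp
  have G: "irreducible G" "degree G = m" "lead_coeff G = 1" "coeff G (m - 1) = coeff g 1"
    using g \<open>m \<ge> 1\<close> by (simp_all add: G_def irreducible_reflect_poly coeff_reflect_poly)
  have "p dvd \<beta> ^ m * pcompose G c - pcompose g \<beta>"
    using reflect_poly_cong[OF \<beta>c, of g] g(2) by (simp add: G_def)
  from dvd_add[OF this root[folded \<beta>_def]] have "p dvd \<beta> ^ m * pcompose G c"
    by simp
  moreover have "\<not> p dvd \<beta> ^ m"
    using not_dvd_if_inverse_mod[OF prime \<beta>c] prime prime_elem_dvd_power by blast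
  ultimately have "p dvd pcompose G c"
    using prime by (simp add: prime_elem_dvd_mult_iff)
  then have trace: "p dvd [:coeff g 1:] - (\<Sum>i<m. c ^ 2 ^ i)"
    using trace_coeff_mod[OF G(1,3) prime] G(2,4) by simp
  have "\<delta>\<^sup>2 + \<delta> - c = \<delta> * ((?x + 1) * w - 1)"
    by (simp add: \<delta>_def c_def algebra_simps power2_eq_square bit_poly_two_eq_0)
  then have "p dvd (\<delta>\<^sup>2 + \<delta>) - c"
    using w by simp
  then have "p dvd (\<Sum>i<m. (\<delta>\<^sup>2 + \<delta>) ^ 2 ^ i - c ^ 2 ^ i)"
    by (intro dvd_sum dvd_power_diff)
  then have "p dvd (\<delta> ^ 2 ^ m - \<delta>) - (\<Sum>i<m. c ^ 2 ^ i)"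
    by (simp add: sum_subtractf sum_frobenius_telescope)
  from dvd_diff[OF trace this] show ?thesis
    by (simp add: \<delta>_def algebra_simps)
qed

lemma trace_value_mod:
  fixes p u w w' :: "bit poly"
  assumes prime: "prime_elem p" and trace: "p dvd [:a:] - (u * w' - [:0, 1:] * w)"
    and w: "p dvd ([:0, 1:] + 1) * w - 1" and w': "p dvd (u + 1) * w' - 1"
  shows "p dvd u - [:0, 1:] \<Longrightarrow> a = 0" and "p dvd [:0, 1:] * u - 1 \<Longrightarrow> a = 1"
proof -
  let ?x = "[:0, 1:] :: bit poly"
  show "a = 0" if "p dvd u - ?x"
  proof -
    from dvd_add[OF trace dvd_frac_succ_diff[OF that w w']] have "p dvd [:a:] - [:0:]"
      by simp
    then show ?thesis
      by (rule prime_elem_dvd_const_diff[OF prime])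
  qed
  show "a = 1" if "p dvd ?x * u - 1"
  proof -
    from dvd_add[OF trace dvd_frac_succ_inverse[OF that w w']]
    have "p dvd [:a:] - 1 + 2 * (?x * w)"
      by (simp add: algebra_simps)
    then have "p dvd [:a:] - [:1:]"
      by (simp add: bit_poly_two_eq_0 one_pCons)
    then show ?thesis
      by (rule prime_elem_dvd_const_diff[OF prime])
  qed
qed

lemma irreducible_factor_Q_transform_cases:
  fixes g p :: "bit poly"
  assumes g: "irreducible g" "degree g = m" "coeff g 0 = 1"
    and p: "irreducible p" and p_dvd: "p dvd Q_transform m g"
  shows "p dvd [:0, 1:] ^ 2 ^ m - [:0, 1:] \<and> coeff g 1 = 0 \<or>
         p dvd [:0, 1:] * [:0, 1:] ^ 2 ^ m - 1 \<and> coeff g 1 = 1"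
proof -
  let ?x = "[:0, 1:] :: bit poly"
  define u where "u = ?x ^ 2 ^ m"
  have prime: "prime_elem p"
    using p by (rule field_poly_irreducible_imp_prime)
  have "m \<ge> 1"
    using irreducible_degree_pos[OF g(1)] g(2) by simp
  note factor = irreducible_factor_Q_transformD[OF g(2) \<open>m \<ge> 1\<close> g(3) p p_dvd]
  obtain \<xi> where \<xi>: "p dvd ?x * \<xi> - 1" and root: "p dvd pcompose g (?x + \<xi>)"
    using factor(3) by blast
  have "[:1, 1:] = ?x + 1"
    by (simp add: one_pCons)
  then obtain w where w: "p dvd (?x + 1) * w - 1"
    using exists_inverse_mod_irreducible[OF p factor(2)] by auto
  have "p dvd (?x + \<xi>) ^ 2 ^ m - (?x + \<xi>)"
    using fermat_little_poly_root[OF g(1) root] g(2) by simp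
  then have "p dvd u - ?x \<or> p dvd ?x * u - 1"
    using frobenius_dichotomy_mod[OF prime \<xi>] by (simp add: u_def)
  moreover have "p dvd [:coeff g 1:] - (u * w ^ 2 ^ m - ?x * w)"
    using coeff_1_trace_mod[OF g prime root \<xi> w] by (simp only: u_def power_mult_distrib)
  moreover have "p dvd ((?x + 1) * w) ^ 2 ^ m - 1 ^ 2 ^ m"
    using w by (rule dvd_power_diff)
  then have "p dvd (u + 1) * w ^ 2 ^ m - 1"
    by (simp only: u_def power_mult_distrib bit_poly_add_power_two_power power_one)
  ultimately show ?thesis
    using trace_value_mod[OF prime _ w] by (auto simp: u_def)
qed

text \<open>The degree of \<open>p\<close> divides \<open>2 * m\<close> since \<open>x ^ 2 ^ (2 * m) = x\<close> modulo \<open>p\<close>, it is a multiple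
  of \<open>m\<close> since \<open>p\<close> has the root \<open>x + 1/x\<close> of \<open>g\<close>, and it is not \<open>m\<close> since \<open>x ^ 2 ^ m \<noteq> x\<close>.\<close>

lemma degree_irreducible_factor_Q_transform:
  fixes g p :: "bit poly"
  assumes g: "irreducible g" "degree g = m" "coeff g 0 = 1" "coeff g 1 = 1"
    and p: "irreducible p" and p_dvd: "p dvd Q_transform m g"
  shows "degree p = 2 * m"
proof -
  let ?x = "[:0, 1:] :: bit poly"
  have "m \<ge> 1"
    using irreducible_degree_pos[OF g(1)] g(2) by simp
  note factor = irreducible_factor_Q_transformD[OF g(2) \<open>m \<ge> 1\<close> g(3) p p_dvd]
  have inverse: "p dvd ?x * ?x ^ 2 ^ m - 1"
    using irreducible_factor_Q_transform_cases[OF g(1-3) p p_dvd] g(4) by simp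
  have not_fixed: "\<not> p dvd ?x ^ 2 ^ m - ?x"
  proof
    assume "p dvd ?x ^ 2 ^ m - ?x"
    then have "p dvd ?x * (?x ^ 2 ^ m - ?x)"
      by (rule dvd_mult)
    with inverse have "p dvd (?x * ?x ^ 2 ^ m - 1) - ?x * (?x ^ 2 ^ m - ?x)"
      by (rule dvd_diff)
    also have "(?x * ?x ^ 2 ^ m - 1) - ?x * (?x ^ 2 ^ m - ?x) = (?x - 1) * (?x + 1)"
      by (simp add: algebra_simps)
    also have "?x - 1 = ?x + 1"
      by (rule bit_poly_diff_eq_add)
    finally have "p dvd ?x + 1"
      using field_poly_irreducible_imp_prime[OF p] by (simp only: prime_elem_dvd_mult_iff disj_absorb)
    with factor(2) show False
      by (simp add: one_pCons)
  qed
  have "p dvd ?x ^ 2 ^ (2 * m) - ?x"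
    using dvd_power_square_exponent_diff[OF inverse] by (simp add: mult_2 power_add)
  then have "degree p dvd 2 * m"
    using degree_dvd_if_root_mod_power_fixed[OF p p, of ?x "2 * m"] \<open>m \<ge> 1\<close> by simp
  moreover obtain \<xi> where root: "p dvd pcompose g (?x + \<xi>)"
    using factor(3) by blast
  then have "m dvd degree p"
    using degree_dvd_if_root_mod_power_fixed[OF g(1) p root] fermat_little_poly[OF p, of "?x + \<xi>"]
      irreducible_degree_pos[OF p] g(2) by simp
  moreover have "degree p \<noteq> m"
    using fermat_little_poly[OF p, of ?x] not_fixed by auto
  ultimately show ?thesis
    using dvd_double_cases[of m "degree p"] \<open>m \<ge> 1\<close> by auto
qed

lemma irreducible_Q_transform:
  fixes g :: "bit poly"
  assumes g: "irreducible g" "degree g = m" "coeff g 0 = 1" "coeff g 1 = 1"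
  shows "irreducible (Q_transform m g)"
proof (rule irreducibleI)
  have "g \<noteq> 0" and "m \<ge> 1"
    using g irreducible_degree_pos[OF g(1)] by auto
  then have degree: "degree (Q_transform m g) = 2 * m"
    using degree_Q_transform[of g m] g(2) by simp
  with \<open>m \<ge> 1\<close> show "Q_transform m g \<noteq> 0"
    by auto
  with degree \<open>m \<ge> 1\<close> show "\<not> is_unit (Q_transform m g)"
    by (simp add: is_unit_iff_degree)
  fix a b
  assume ab: "Q_transform m g = a * b"
  show "is_unit a \<or> is_unit b"
  proof (rule ccontr)
    assume "\<not> (is_unit a \<or> is_unit b)"
    moreover have "a \<noteq> 0" "b \<noteq> 0"
      using ab \<open>Q_transform m g \<noteq> 0\<close> by auto
    ultimately have "degree a \<ge> 1" and "degree a < 2 * m"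
      using ab degree by (auto simp: is_unit_iff_degree degree_mult_eq)
    then obtain p where p: "irreducible p" "p dvd a"
      using exists_irreducible_factor by blast
    then have "degree p = 2 * m"
      using ab by (intro degree_irreducible_factor_Q_transform[OF g p(1)]) simp
    moreover have "degree p \<le> degree a"
      using p(2) \<open>a \<noteq> 0\<close> by (rule dvd_imp_degree_le)
    ultimately show False
      using \<open>degree a < 2 * m\<close> by simp
  qed
qed

lemma coeff_0_if_irreducible_Q_transform:
  fixes g :: "bit poly"
  assumes m: "m \<ge> 1" and g: "degree g = m" and f: "irreducible (Q_transform m g)"
  shows "coeff g 0 = 1"
proof (rule ccontr)
  assume "coeff g 0 \<noteq> 1"
  then have "poly (Q_transform m g) 1 = 0"
    by (simp add: poly_Q_transform_1)
  moreover have "g \<noteq> 0"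
    using m g by auto
  then have "degree (Q_transform m g) = 2 * m"
    using degree_Q_transform[of g m] g by simp
  ultimately show False
    using root_imp_reducible_poly[of "Q_transform m g" 1] f m by simp
qed

lemma irreducible_if_irreducible_Q_transform:
  fixes g :: "bit poly"
  assumes m: "m \<ge> 1" and g: "degree g = m" "coeff g 0 = 1" and f: "irreducible (Q_transform m g)"
  shows "irreducible g"
proof (rule irreducibleI)
  let ?x = "[:0, 1:] :: bit poly" and ?f = "Q_transform m g"
  show "g \<noteq> 0"
    using m g by auto
  then show "\<not> is_unit g"
    using m g by (simp add: is_unit_iff_degree)
  have degree_f: "degree ?f = 2 * m"
    using degree_Q_transform[of g m] g \<open>g \<noteq> 0\<close> by simp
  obtain \<xi> where \<xi>: "?f dvd ?x * \<xi> - 1" and root: "?f dvd pcompose g (?x + \<xi>)"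
    using irreducible_factor_Q_transformD(3)[OF g(1) m g(2) f dvd_refl] by blast
  have not_root: "\<not> ?f dvd pcompose a (?x + \<xi>)" if "a \<noteq> 0" "degree a < m" for a
  proof
    assume "?f dvd pcompose a (?x + \<xi>)"
    with \<xi> have "?f dvd Q_transform (degree a) a"
      by (rule dvd_Q_transform_if_root)
    moreover have "Q_transform (degree a) a \<noteq> 0"
      using that(1) by (simp add: Q_transform_eq_0_iff)
    ultimately have "degree ?f \<le> degree (Q_transform (degree a) a)"
      by (rule dvd_imp_degree_le)
    with degree_f that show False
      using degree_Q_transform[OF that(1) order_refl] by simp
  qed
  fix a b
  assume ab: "g = a * b"
  show "is_unit a \<or> is_unit b"
  proof (rule ccontr)
    assume "\<not> (is_unit a \<or> is_unit b)"
    moreover have "a \<noteq> 0" "b \<noteq> 0"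
      using ab \<open>g \<noteq> 0\<close> by auto
    ultimately have "degree a < m" "degree b < m"
      using ab g by (auto simp: is_unit_iff_degree degree_mult_eq)
    moreover have "?f dvd pcompose a (?x + \<xi>) * pcompose b (?x + \<xi>)"
      using root ab by (simp add: pcompose_mult)
    then have "?f dvd pcompose a (?x + \<xi>) \<or> ?f dvd pcompose b (?x + \<xi>)"
      using field_poly_irreducible_imp_prime[OF f] by (simp add: prime_elem_dvd_mult_iff)
    ultimately show False
      using not_root \<open>a \<noteq> 0\<close> \<open>b \<noteq> 0\<close> by blast
  qed
qed

lemma Q_transform_irreducibleD:
  fixes g :: "bit poly"
  assumes m: "m \<ge> 1" and g: "degree g = m" and f: "irreducible (Q_transform m g)"
  shows "coeff g 0 = 1" and "irreducible g" and "coeff g 1 = 1"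
proof -
  let ?x = "[:0, 1:] :: bit poly" and ?f = "Q_transform m g"
  show g0: "coeff g 0 = 1"
    using m g f by (rule coeff_0_if_irreducible_Q_transform)
  show g_irreducible: "irreducible g"
    using m g g0 f by (rule irreducible_if_irreducible_Q_transform)
  have "\<not> ?f dvd ?x ^ 2 ^ m - ?x"
  proof
    assume "?f dvd ?x ^ 2 ^ m - ?x"
    then have "degree ?f \<le> m"
      using degree_le_if_root_mod_power_fixed[OF f field_poly_irreducible_imp_prime[OF f], of ?x m] m
      by simp
    moreover have "g \<noteq> 0"
      using m g by auto
    then have "degree ?f = 2 * m"
      using degree_Q_transform[of g m] g by simp
    ultimately show False
      using m by simp
  qed
  then show "coeff g 1 = 1"
    using irreducible_factor_Q_transform_cases[OF g_irreducible g g0 f dvd_refl] by blast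
qed

section \<open>Counting modulo two\<close>

lemma even_card_if_involution_without_fixed_points:
  assumes "\<And>x. x \<in> B \<Longrightarrow> \<sigma> x \<in> B" and "\<And>x. x \<in> B \<Longrightarrow> \<sigma> (\<sigma> x) = x"
    and "\<And>x. x \<in> B \<Longrightarrow> \<sigma> x \<noteq> x"
  shows "even (card B)"
proof -
  have "(\<Sum>x\<in>B. 1 :: bit) = 0"
    using assms by (intro sum_involution_eq_0[where h = \<sigma>]) simp_all
  then have "of_nat (card B) = (0 :: bit)"
    by simp
  then show ?thesis
    by (simp add: of_nat_eq_0_iff_char_dvd)
qed

lemma odd_card_iff_odd_card_fixed_points:
  assumes "finite A" and "\<And>x. x \<in> A \<Longrightarrow> \<sigma> x \<in> A" and "\<And>x. x \<in> A \<Longrightarrow> \<sigma> (\<sigma> x) = x"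
  shows "odd (card A) \<longleftrightarrow> odd (card {x \<in> A. \<sigma> x = x})"
proof -
  let ?F = "{x \<in> A. \<sigma> x = x}" and ?B = "{x \<in> A. \<sigma> x \<noteq> x}"
  have "card A = card (?F \<union> ?B)"
    by (rule arg_cong[where f = card]) auto
  also have "\<dots> = card ?F + card ?B"
    using assms(1) by (intro card_Un_disjoint) auto
  finally have "card A = card ?F + card ?B" .
  moreover have "even (card ?B)"
    using assms by (intro even_card_if_involution_without_fixed_points[where \<sigma> = \<sigma>]) auto
  ultimately show ?thesis
    by simp
qed

lemma finite_S11: "finite (S11 n)"
  by (rule finite_subset[OF _ finite_polys_degree_le[of n]]) (auto simp: S11_def irred_polys_def)

lemma S11D:
  assumes "f \<in> S11 n" and "n \<ge> 2"
  shows "irreducible f" "degree f = n" "lead_coeff f = 1" "coeff f (n - 1) = 1" "coeff f 1 = 1"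
    "coeff f 0 = 1"
  using assms coeff_0_irreducible[of f] by (auto simp: S11_def irred_polys_def)

lemma S11I:
  assumes "irreducible f" "degree f = n" "lead_coeff f = 1" "coeff f (n - 1) = 1" "coeff f 1 = 1"
  shows "f \<in> S11 n"
  using assms by (simp add: S11_def irred_polys_def)

lemma reflect_poly_in_S11:
  assumes f: "f \<in> S11 n" and "n \<ge> 2"
  shows "reflect_poly f \<in> S11 n"
proof -
  note F = S11D[OF assms]
  then have "coeff f 0 \<noteq> 0"
    by simp
  with F assms(2) show ?thesis
    by (intro S11I) (simp_all add: irreducible_reflect_poly coeff_reflect_poly)
qed

lemma self_reciprocal_S11_odd:
  assumes f: "f \<in> S11 n" and "n \<ge> 2" and "odd n" and "reflect_poly f = f"
  shows False
proof -
  note F = S11D[OF f \<open>n \<ge> 2\<close>]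
  have sym: "coeff f k = coeff f (n - k)" if "k \<le> n" for k
    using reflect_poly_eq_iff_coeff_sym[OF F(2)] assms(4) that by blast
  have "poly f 1 = (\<Sum>k\<le>n. coeff f k)"
    by (simp only: poly_altdef F(2) power_one mult_1_right)
  also have "\<dots> = 0"
  proof (rule sum_involution_eq_0[where h = "\<lambda>k. n - k"])
    fix k
    assume "k \<in> {..n}"
    then have "k \<le> n"
      by simp
    then show "coeff f (n - k) + coeff f k = 0"
      unfolding sym[OF \<open>k \<le> n\<close>, symmetric] by (cases "coeff f k") simp_all
    show "n - k \<in> {..n}" and "n - (n - k) = k"
      using \<open>k \<le> n\<close> by simp_all
    show "n - k \<noteq> k"
      using \<open>odd n\<close> by presburger
  qed
  finally have "poly f 1 = 0" .
  then show False
    using root_imp_reducible_poly[of f 1] F(1,2) \<open>n \<ge> 2\<close> by simp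
qed

definition self_reciprocal_S11 :: "nat \<Rightarrow> bit poly set" where
  "self_reciprocal_S11 n = {f \<in> S11 n. reflect_poly f = f}"

lemma Q_transform_in_self_reciprocal_S11:
  assumes m: "m \<ge> 2" and g: "g \<in> S11 m"
  shows "Q_transform m g \<in> self_reciprocal_S11 (2 * m)"
proof -
  note G = S11D[OF g m]
  let ?f = "Q_transform m g"
  have "g \<noteq> 0"
    using G(2) m by auto
  then have degree: "degree ?f = 2 * m"
    using degree_Q_transform[of g m] G(2) by simp
  have sym: "\<forall>k\<le>2 * m. coeff ?f k = coeff ?f (2 * m - k)"
    using coeff_Q_transform_sym by blast
  have "coeff ?f 1 = 1"
    using coeff_1_Q_transform[of m g] m G(4) by simp
  moreover have "?f \<in> S11 (2 * m)"
  proof (rule S11I)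
    show "irreducible ?f"
      using irreducible_Q_transform[OF G(1,2,6,5)] .
    show "lead_coeff ?f = 1"
      using lead_coeff_Q_transform[of g m] G(2,3) by simp
    have "coeff ?f 1 = coeff ?f (2 * m - 1)"
      using sym[rule_format, of 1] m by simp
    with \<open>coeff ?f 1 = 1\<close> show "coeff ?f (2 * m - 1) = 1"
      by simp
  qed (use degree \<open>coeff ?f 1 = 1\<close> in simp_all)
  moreover have "reflect_poly ?f = ?f"
    using reflect_poly_eq_iff_coeff_sym[OF degree] sym by blast
  ultimately show ?thesis
    by (simp add: self_reciprocal_S11_def)
qed

lemma self_reciprocal_S11_subset_Q_transform:
  assumes m: "m \<ge> 2" and f: "f \<in> self_reciprocal_S11 (2 * m)"
  shows "f \<in> Q_transform m ` S11 m"
proof -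
  have "f \<in> S11 (2 * m)" and "reflect_poly f = f"
    using f by (auto simp: self_reciprocal_S11_def)
  have "2 * m \<ge> 2"
    using m by simp
  note F = S11D[OF \<open>f \<in> S11 (2 * m)\<close> this]
  have "\<forall>k\<le>2 * m. coeff f k = coeff f (2 * m - k)"
    using reflect_poly_eq_iff_coeff_sym[OF F(2)] \<open>reflect_poly f = f\<close> by blast
  moreover have "degree f \<le> 2 * m"
    using F(2) by simp
  ultimately obtain g where g: "degree g \<le> m" "f = Q_transform m g"
    using Q_transform_surj[of f m] by blast
  then have "g \<noteq> 0"
    using F(1) by (auto simp: Q_transform_def)
  then have "degree g = m"
    using degree_Q_transform[OF _ g(1)] g(2) F(2) m by simp
  have "m \<ge> 1"
    using m by simp
  note irreducible = Q_transform_irreducibleD[OF this \<open>degree g = m\<close>, folded g(2), OF F(1)]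
  have "g \<in> S11 m"
  proof (rule S11I[OF irreducible(2) \<open>degree g = m\<close>])
    show "lead_coeff g = 1"
      using leading_coeff_neq_0[OF \<open>g \<noteq> 0\<close>] by (simp only: bit_not_zero_iff)
    show "coeff g (m - 1) = 1"
      using coeff_1_Q_transform[OF \<open>m \<ge> 1\<close>, of g] F(5) g(2) by simp
  qed (rule irreducible(3))
  with g(2) show ?thesis
    by blast
qed

lemma card_self_reciprocal_S11:
  assumes "m \<ge> 2"
  shows "card (self_reciprocal_S11 (2 * m)) = card (S11 m)"
proof -
  have "self_reciprocal_S11 (2 * m) = Q_transform m ` S11 m"
    using Q_transform_in_self_reciprocal_S11[OF assms] self_reciprocal_S11_subset_Q_transform[OF assms]
    by blast
  moreover have "inj_on (Q_transform m) (S11 m)"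
    using inj_Q_transform by (rule inj_on_subset) (use S11D(2)[OF _ assms] in auto)
  ultimately show ?thesis
    by (simp add: card_image)
qed

lemma odd_card_S11_iff_self_reciprocal:
  assumes "n \<ge> 2"
  shows "odd (card (S11 n)) \<longleftrightarrow> odd (card (self_reciprocal_S11 n))"
  unfolding self_reciprocal_S11_def
  using finite_S11 reflect_poly_in_S11[OF _ assms] S11D(6)[OF _ assms]
  by (intro odd_card_iff_odd_card_fixed_points) auto

lemma even_card_S11_odd:
  assumes "n \<ge> 2" and "odd n"
  shows "even (card (S11 n))"
proof -
  have "self_reciprocal_S11 n = {}"
    using self_reciprocal_S11_odd[OF _ assms(1,2)] by (auto simp: self_reciprocal_S11_def)
  then show ?thesis
    using odd_card_S11_iff_self_reciprocal[OF assms(1)] by simp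
qed

lemma odd_card_S11_double_iff:
  assumes "m \<ge> 2"
  shows "odd (card (S11 (2 * m))) \<longleftrightarrow> odd (card (S11 m))"
  using odd_card_S11_iff_self_reciprocal[of "2 * m"] card_self_reciprocal_S11[OF assms] assms by simp

lemma S11_2: "S11 2 = {[:1, 1, 1:]}"
proof (intro equalityI subsetI)
  fix f :: "bit poly"
  assume "f \<in> S11 2"
  note F = S11D[OF this order_refl]
  have "f = [:1, 1, 1:]"
  proof (rule poly_eqI)
    fix k :: nat
    consider "k = 0" | "k = 1" | "k = 2" | "k > 2"
      by linarith
    then show "coeff f k = coeff [:1, 1, 1:] k"
      using F by cases (auto simp: coeff_eq_0 numeral_2_eq_2)
  qed
  then show "f \<in> {[:1, 1, 1:]}"
    by simp
next
  fix f :: "bit poly"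
  assume "f \<in> {[:1, 1, 1:]}"
  moreover have "Q_transform 1 [:1, 1:] = [:1, 1, 1 :: bit:]"
    by (simp add: Q_transform_def monom_altdef)
  moreover have "irreducible (Q_transform 1 [:1, 1 :: bit:])"
    by (rule irreducible_Q_transform) (simp_all add: irreducible_linear_field_poly)
  ultimately show "f \<in> S11 2"
    by (auto intro: S11I)
qed

lemma ex_power_two_double_iff:
  fixes m :: nat
  assumes "m \<ge> 2"
  shows "(\<exists>k::nat. k \<ge> 1 \<and> 2 * m = 2 ^ k) \<longleftrightarrow> (\<exists>k::nat. k \<ge> 1 \<and> m = 2 ^ k)"
proof
  assume "\<exists>k::nat. k \<ge> 1 \<and> 2 * m = 2 ^ k"
  then obtain k where "k \<ge> 1" and "2 * m = 2 ^ k"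
    by blast
  then have "m = 2 ^ (k - 1)"
    by (cases k) simp_all
  moreover have "k - 1 \<ge> 1"
    using assms \<open>m = 2 ^ (k - 1)\<close> by (cases "k - 1") simp_all
  ultimately show "\<exists>k::nat. k \<ge> 1 \<and> m = 2 ^ k"
    by blast
next
  assume "\<exists>k::nat. k \<ge> 1 \<and> m = 2 ^ k"
  then obtain k where "m = 2 ^ k"
    by blast
  then show "\<exists>k::nat. k \<ge> 1 \<and> 2 * m = 2 ^ k"
    by (intro exI[of _ "Suc k"]) simp
qed

theorem proposition1:
  fixes n :: nat
  assumes "n \<ge> 2"
  shows "odd (card (S11 n)) \<longleftrightarrow> (\<exists>k::nat. k \<ge> 1 \<and> n = 2 ^ k)"
  using assms
proof (induction n rule: less_induct)
  case (less n)
  show ?case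
  proof (cases "even n")
    case False
    then show ?thesis
      using even_card_S11_odd[OF less.prems] by auto
  next
    case True
    then obtain m where n: "n = 2 * m" ..
    consider "m = 1" | "m \<ge> 2"
      using less.prems n by linarith
    then show ?thesis
    proof cases
      case 1
      then show ?thesis
        using n by (auto simp: S11_2 intro: exI[of _ 1])
    next
      case 2
      then show ?thesis
        using less.IH[of m] odd_card_S11_double_iff[OF 2] ex_power_two_double_iff[OF 2] n by simp
    qed
  qed
qed

end
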